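(* Let $G$ be a finite connected multigraph without self-loops with a boundary vertex $\partial$, where both orientations of each edge $e$ carry the same nonnegative weight $U_e$, and the collection of weights of the unoriented edges $(U_e)_{e\in E}$ is generic. Perform the CLEB walk from a vertex $x\neq\partial$, and let $S_t$ be the set of oriented edges exposed by it up to step $t$. Let $\tau_1=1$ and, inductively for $k\ge2$, let $\tau_k$ be the smallest $t>\tau_{k-1}$ such that the oriented edge revealed by the CLEB walk at step $t$ has a reversal that was not exposed before step $t$. Let $\bar S_{\tau_k}$ be the set of unoriented edges one of whose orientations lies in $S_{\tau_k}$. Let $(T_k)_{k\ge1}$ be the invasion percolation process started at $x$. Then $\bar S_{\tau_k}=T_k$ for every $k$ for which $\tau_k$ is defined.
   Context: Weights $(W_x)_{x\in N}$ are generic if $\sum_{x\in S}n_xW_x\neq0$ for every finite $S$ and integers $n_x$ not all zero. Invasion percolation started at $x$: $T_1$ is the edge of smallest weight incident to $x$; given the tree $T_k$, $T_{k+1}$ is $T_k$ together with the edge of smallest weight among edges with exactly one endpoint in (the vertex set of) $T_k$. Contraction of an oriented cycle $C$: remove the vertices of $C$ and all oriented edges with both endpoints in $C$, add a new vertex $v_C$, and replace each oriented edge with exactly one endpoint in $C$ by the edge with that endpoint replaced by $v_C$; edges of contracted graphs are identified with edges of $G$. CLEB walk from $x$: set $G_0=G$, $U_0$ the given weights of oriented edges, $S_0=\emptyset$, $P_0$ the empty path at $x$, current vertex $v_1=x$. At step $j\ge1$, subtract $\pi=\min$ of the current weights over the outgoing edges of $v_j$ in $G_{j-1}$ from the weights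 of all those outgoing edges, and let $\vec e$ be the unique outgoing edge of $v_j$ now of weight $0$; $S_j=S_{j-1}\cup\{\vec e\}$ ($\vec e$ is said to be revealed/exposed at step $j$). If $\vec e_+$ is not on the path $P_{j-1}$: $G_j=G_{j-1}$, $P_j=P_{j-1}$ extended by $\vec e$, $v_{j+1}=\vec e_+$, and stop if $\vec e_+=\partial$. If $\vec e_+$ is a vertex $y$ of $P_{j-1}$: contract the cycle formed by the part of $P_{j-1}$ from $y$ to $v_j$ together with $\vec e$ to obtain $G_j$ (with the current modified weights), let $P_j$ be $P_{j-1}$ truncated at $y$ (now ending at the new vertex $v_C$), and $v_{j+1}=v_C$. *)

theory Defs
  imports Complex_Main
begin

text \<open>A multigraph is given by a vertex set V, an edge set E (edges are elements of a
type 'e, so parallel edges are allowed) and endpoint maps src, tgt.  The oriented edge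
(e, True) goes from src e to tgt e, and (e, False) goes from tgt e to src e.\<close>

definition otail :: "('e \<Rightarrow> 'v) \<Rightarrow> ('e \<Rightarrow> 'v) \<Rightarrow> 'e \<times> bool \<Rightarrow> 'v" where
  "otail src tgt d = (if snd d then src (fst d) else tgt (fst d))"

definition ohead :: "('e \<Rightarrow> 'v) \<Rightarrow> ('e \<Rightarrow> 'v) \<Rightarrow> 'e \<times> bool \<Rightarrow> 'v" where
  "ohead src tgt d = (if snd d then tgt (fst d) else src (fst d))"

definition flip :: "'e \<times> bool \<Rightarrow> 'e \<times> bool" where
  "flip d = (fst d, \<not> snd d)"

definition mg_adj :: "'e set \<Rightarrow> ('e \<Rightarrow> 'v) \<Rightarrow> ('e \<Rightarrow> 'v) \<Rightarrow> ('v \<times> 'v) set" where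
  "mg_adj E src tgt = {(src e, tgt e) | e. e \<in> E} \<union> {(tgt e, src e) | e. e \<in> E}"

definition mg_connected :: "'v set \<Rightarrow> 'e set \<Rightarrow> ('e \<Rightarrow> 'v) \<Rightarrow> ('e \<Rightarrow> 'v) \<Rightarrow> bool" where
  "mg_connected V E src tgt = (\<forall>u\<in>V. \<forall>w\<in>V. (u, w) \<in> (mg_adj E src tgt)\<^sup>*)"

definition finite_loopless_multigraph ::
  "'v set \<Rightarrow> 'e set \<Rightarrow> ('e \<Rightarrow> 'v) \<Rightarrow> ('e \<Rightarrow> 'v) \<Rightarrow> bool" where
  "finite_loopless_multigraph V E src tgt =
     (finite V \<and> finite E \<and> (\<forall>e\<in>E. src e \<in> V \<and> tgt e \<in> V) \<and> (\<forall>e\<in>E. src e \<noteq> tgt e))"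

definition generic :: "'a set \<Rightarrow> ('a \<Rightarrow> real) \<Rightarrow> bool" where
  "generic N W = (\<forall>S n. finite S \<longrightarrow> S \<subseteq> N \<longrightarrow> (\<exists>x\<in>S. n x \<noteq> (0::int)) \<longrightarrow>
                       (\<Sum>x\<in>S. of_int (n x) * W x) \<noteq> 0)"

definition ip_verts :: "('e \<Rightarrow> 'v) \<Rightarrow> ('e \<Rightarrow> 'v) \<Rightarrow> 'v \<Rightarrow> 'e set \<Rightarrow> 'v set" where
  "ip_verts src tgt x T = {x} \<union> src ` T \<union> tgt ` T"

definition ip_candidates :: "'e set \<Rightarrow> ('e \<Rightarrow> 'v) \<Rightarrow> ('e \<Rightarrow> 'v) \<Rightarrow> 'v \<Rightarrow> 'e set \<Rightarrow> 'e set" where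
  "ip_candidates E src tgt x T =
     {e \<in> E. (src e \<in> ip_verts src tgt x T) \<noteq> (tgt e \<in> ip_verts src tgt x T)}"

fun invasion :: "'e set \<Rightarrow> ('e \<Rightarrow> 'v) \<Rightarrow> ('e \<Rightarrow> 'v) \<Rightarrow> ('e \<Rightarrow> real) \<Rightarrow> 'v \<Rightarrow> nat \<Rightarrow> 'e set" where
  "invasion E src tgt U x 0 = {}"
| "invasion E src tgt U x (Suc k) =
     (let T = invasion E src tgt U x k; C = ip_candidates E src tgt x T in
      if C = {} then T else insert (arg_min_on U C) T)"

text \<open>Vertices of the contracted graph G_j are represented by
sets of original vertices: cls u is the vertex of G_j containing the original vertex u.
The path P_j is the list of its vertices (of G_j), the current vertex is its last entry.
wt is the current weight of oriented edges, exposed is S_j, stopped records that the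
walk has reached the boundary vertex, revealed is the edge revealed at the last step.\<close>

record ('v, 'e) cleb_state =
  cls :: "'v \<Rightarrow> 'v set"
  path :: "'v set list"
  wt :: "'e \<times> bool \<Rightarrow> real"
  exposed :: "('e \<times> bool) set"
  stopped :: bool
  revealed :: "('e \<times> bool) option"

definition cleb_init :: "('e \<Rightarrow> real) \<Rightarrow> 'v \<Rightarrow> ('v, 'e) cleb_state" where
  "cleb_init U x = \<lparr> cls = (\<lambda>u. {u}), path = [{x}], wt = (\<lambda>d. U (fst d)),
                     exposed = {}, stopped = False, revealed = None \<rparr>"

definition cleb_step :: "'e set \<Rightarrow> ('e \<Rightarrow> 'v) \<Rightarrow> ('e \<Rightarrow> 'v) \<Rightarrow> 'v \<Rightarrow>
     ('v, 'e) cleb_state \<Rightarrow> ('v, 'e) cleb_state" where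
  "cleb_step E src tgt bd s =
    (if stopped s then s else
     (let v = last (path s);
          out = {d. fst d \<in> E \<and> otail src tgt d \<in> v \<and> ohead src tgt d \<notin> v};
          \<pi> = Min (wt s ` out);
          W' = (\<lambda>d. if d \<in> out then wt s d - \<pi> else wt s d);
          ed = (THE d. d \<in> out \<and> W' d = 0);
          hb = cls s (ohead src tgt ed)
      in if hb \<in> set (path s) then
           (let i = (LEAST i. i < length (path s) \<and> path s ! i = hb);
                cyc = drop i (path s);
                new = \<Union> (set cyc)
            in s\<lparr> cls := (\<lambda>u. if cls s u \<in> set cyc then new else cls s u),
                  path := take i (path s) @ [new],
                  wt := W', exposed := insert ed (exposed s), revealed := Some ed \<rparr>)
         else
           s\<lparr> path := path s @ [hb], wt := W', exposed := insert ed (exposed s),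
              stopped := (bd \<in> hb), revealed := Some ed \<rparr>))"

fun cleb :: "'e set \<Rightarrow> ('e \<Rightarrow> 'v) \<Rightarrow> ('e \<Rightarrow> 'v) \<Rightarrow> ('e \<Rightarrow> real) \<Rightarrow> 'v \<Rightarrow> 'v \<Rightarrow> nat \<Rightarrow>
     ('v, 'e) cleb_state" where
  "cleb E src tgt U bd x 0 = cleb_init U x"
| "cleb E src tgt U bd x (Suc j) = cleb_step E src tgt bd (cleb E src tgt U bd x j)"

definition cleb_new_step :: "'e set \<Rightarrow> ('e \<Rightarrow> 'v) \<Rightarrow> ('e \<Rightarrow> 'v) \<Rightarrow> ('e \<Rightarrow> real) \<Rightarrow> 'v \<Rightarrow> 'v \<Rightarrow>
     nat \<Rightarrow> bool" where
  "cleb_new_step E src tgt U bd x t =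
     (1 \<le> t \<and> \<not> stopped (cleb E src tgt U bd x (t - 1)) \<and>
      (case revealed (cleb E src tgt U bd x t) of
         None \<Rightarrow> False
       | Some d \<Rightarrow> flip d \<notin> exposed (cleb E src tgt U bd x (t - 1))))"

text \<open>cleb_tau k t: tau_k is defined and equals t.\<close>

inductive cleb_tau :: "'e set \<Rightarrow> ('e \<Rightarrow> 'v) \<Rightarrow> ('e \<Rightarrow> 'v) \<Rightarrow> ('e \<Rightarrow> real) \<Rightarrow> 'v \<Rightarrow> 'v \<Rightarrow>
     nat \<Rightarrow> nat \<Rightarrow> bool"
  for E src tgt U bd x where
  tau_one: "cleb_tau E src tgt U bd x 1 1"
| tau_suc: "cleb_tau E src tgt U bd x k s \<Longrightarrow> s < t \<Longrightarrow> cleb_new_step E src tgt U bd x t \<Longrightarrow>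
            (\<forall>u. s < u \<and> u < t \<longrightarrow> \<not> cleb_new_step E src tgt U bd x u) \<Longrightarrow>
            cleb_tau E src tgt U bd x (Suc k) t"

definition unoriented :: "('e \<times> bool) set \<Rightarrow> 'e set" where
  "unoriented S = {e. \<exists>b. (e, b) \<in> S}"

end

theory Submission
  imports Defs
begin

(* Because both orientations of an edge carry the same weight, every cycle closed by the CLEB
   walk has length two.  The walk's path is a list of blocks (contracted vertices) covering the
   vertex set of the exposed tree; the edge f_i along which the walk left block i is the
   lightest exit of block i, the weights U(f_i) strictly decrease along the path, and the current
   weight of an exit d of block i is U_d - U(f_i) (for the last block, U_d minus a constant).
   Hence the walk reveals the lightest exit d of the last block.  Either d is the reversal of the
   edge just used, and the last two blocks merge without exposing a new unoriented edge; or d is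
   lighter than every f_i, so it cannot lead back into the path (its reversal would be an exit of
   an earlier block j lighter than f_j) and it is lighter than every other edge leaving the tree:
   it is the next edge of invasion percolation. *)

lemma otail_flip [simp]: "otail src tgt (flip d) = ohead src tgt d"
  by (simp add: otail_def ohead_def flip_def)

lemma ohead_flip [simp]: "ohead src tgt (flip d) = otail src tgt d"
  by (simp add: otail_def ohead_def flip_def)

lemma fst_flip [simp]: "fst (flip d) = fst d"
  by (simp add: flip_def)

lemma flip_flip [simp]: "flip (flip d) = d"
  by (simp add: flip_def)

lemma eq_flip_if_same_edge: "fst d' = fst d \<Longrightarrow> d' \<noteq> d \<Longrightarrow> d' = flip d"
  by (cases d; cases d') (auto simp: flip_def)

lemma crossing_edge_orientation:
  assumes "(src e \<in> A) \<noteq> (tgt e \<in> A)"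
  obtains b where "otail src tgt (e, b) \<in> A" "ohead src tgt (e, b) \<notin> A"
  using assms that[of True] that[of False] by (cases "src e \<in> A") (auto simp: otail_def ohead_def)

lemma unoriented_empty [simp]: "unoriented {} = {}"
  by (simp add: unoriented_def)

lemma unoriented_insert: "unoriented (insert d S) = insert (fst d) (unoriented S)"
  by (cases d) (auto simp: unoriented_def)

lemma fst_in_unoriented_if_flip_in: "flip d \<in> S \<Longrightarrow> fst d \<in> unoriented S"
  by (auto simp: unoriented_def flip_def)

lemma ip_verts_insert:
  "ip_verts src tgt x (insert e T) = insert (src e) (insert (tgt e) (ip_verts src tgt x T))"
  by (auto simp: ip_verts_def)

lemma generic_inj_on:
  assumes "generic N W"
  shows "inj_on W N"
proof (rule inj_onI, rule ccontr)
  fix a b assume ab: "a \<in> N" "b \<in> N" "W a = W b" "a \<noteq> b"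
  define n where "n = (\<lambda>y. if y = a then (1::int) else if y = b then -1 else 0)"
  have "finite {a, b}" "{a, b} \<subseteq> N" "\<exists>y\<in>{a, b}. n y \<noteq> 0"
    using ab by (auto simp: n_def)
  then have "(\<Sum>y\<in>{a, b}. of_int (n y) * W y) \<noteq> 0"
    using assms unfolding generic_def by blast
  then show False
    using ab by (simp add: n_def)
qed

lemma take_nth_nth_eq: "length xs = Suc (Suc n) \<Longrightarrow> take n xs @ [xs ! n, xs ! Suc n] = xs"
  by (metis append.assoc append_Cons append_Nil lessI less_SucI take_Suc_conv_app_nth
      take_all_iff order_refl)

lemma rtrancl_leaves_set:
  "(a, b) \<in> r\<^sup>* \<Longrightarrow> a \<in> A \<Longrightarrow> b \<notin> A \<Longrightarrow> \<exists>u w. (u, w) \<in> r \<and> u \<in> A \<and> w \<notin> A"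
  by (induction rule: rtrancl_induct) auto

locale cleb_graph =
  fixes V :: "'v set" and E :: "'e set" and src tgt :: "'e \<Rightarrow> 'v"
    and U :: "'e \<Rightarrow> real" and bd x :: 'v
  assumes loopless_multigraph: "finite_loopless_multigraph V E src tgt"
    and connected: "mg_connected V E src tgt"
    and bd_in_V: "bd \<in> V"
    and generic_weights: "generic E U"
    and x_in_V: "x \<in> V"
    and x_neq_bd: "x \<noteq> bd"
begin

definition out_edges :: "'v set \<Rightarrow> ('e \<times> bool) set" where
  "out_edges A = {d. fst d \<in> E \<and> otail src tgt d \<in> A \<and> ohead src tgt d \<notin> A}"

definition lightest_out_edge :: "'v set \<Rightarrow> 'e \<times> bool \<Rightarrow> bool" where
  "lightest_out_edge A d0 \<longleftrightarrow>
     d0 \<in> out_edges A \<and> (\<forall>d\<in>out_edges A. d \<noteq> d0 \<longrightarrow> U (fst d0) < U (fst d))"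

lemma lightest_out_edgeD:
  assumes "lightest_out_edge A d0"
  shows "d0 \<in> out_edges A" and "d \<in> out_edges A \<Longrightarrow> d \<noteq> d0 \<Longrightarrow> U (fst d0) < U (fst d)"
  using assms unfolding lightest_out_edge_def by blast+

lemma ohead_in_V: "fst d \<in> E \<Longrightarrow> ohead src tgt d \<in> V"
  using loopless_multigraph by (auto simp: ohead_def finite_loopless_multigraph_def)

lemma finite_out_edges: "finite (out_edges A)"
proof (rule finite_subset)
  show "out_edges A \<subseteq> E \<times> UNIV"
    by (auto simp: out_edges_def)
  show "finite (E \<times> (UNIV :: bool set))"
    using loopless_multigraph by (simp add: finite_loopless_multigraph_def)
qed

lemma out_edges_nonempty:
  assumes "A \<subseteq> V" "a \<in> A" "bd \<notin> A"
  shows "out_edges A \<noteq> {}"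
proof -
  have "(a, bd) \<in> (mg_adj E src tgt)\<^sup>*"
    using connected bd_in_V assms(1,2) unfolding mg_connected_def by blast
  from rtrancl_leaves_set[OF this assms(2,3)]
  obtain u w where uw: "(u, w) \<in> mg_adj E src tgt" "u \<in> A" "w \<notin> A"
    by blast
  then obtain e where "e \<in> E" "(u, w) = (src e, tgt e) \<or> (u, w) = (tgt e, src e)"
    unfolding mg_adj_def by auto
  then have "(e, True) \<in> out_edges A \<or> (e, False) \<in> out_edges A"
    using uw by (auto simp: out_edges_def otail_def ohead_def)
  then show ?thesis
    by auto
qed

lemma out_edge_eq_if_weight_eq:
  assumes "d \<in> out_edges A" "d' \<in> out_edges A" "U (fst d) = U (fst d')"
  shows "d = d'"
proof (rule ccontr)
  assume "d \<noteq> d'"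
  have "fst d' = fst d"
    using generic_inj_on[OF generic_weights] assms by (auto simp: out_edges_def inj_on_def)
  then have "d' = flip d"
    using eq_flip_if_same_edge \<open>d \<noteq> d'\<close> by metis
  then show False
    using assms(1,2) by (simp add: out_edges_def)
qed

lemma lightest_out_edge_exists:
  assumes "out_edges A \<noteq> {}"
  obtains d0 where "lightest_out_edge A d0"
proof -
  obtain d0 where d0: "d0 \<in> out_edges A" "\<not> (\<exists>d\<in>out_edges A. U (fst d) < U (fst d0))"
    using arg_min_if_finite[OF finite_out_edges assms, of "\<lambda>d. U (fst d)"] by blast
  have "U (fst d0) < U (fst d)" if "d \<in> out_edges A" "d \<noteq> d0" for d
    using d0 that out_edge_eq_if_weight_eq[of d A d0] by fastforce
  then show thesis
    using that d0(1) unfolding lightest_out_edge_def by blast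
qed

(* When the current weights of all exits of a block are their weights U lowered by a common
   constant, the walk reveals the lightest exit. *)
lemma lightest_out_edge_shift_Min:
  assumes "lightest_out_edge A d0" "\<forall>d\<in>out_edges A. w d = U (fst d) - c"
  shows "Min (w ` out_edges A) = U (fst d0) - c"
  using assms finite_out_edges
  by (intro Min_eqI) (auto simp: lightest_out_edge_def intro: less_imp_le)

lemma lightest_out_edge_THE:
  assumes "lightest_out_edge A d0" "\<forall>d\<in>out_edges A. w d = U (fst d) - c"
  shows "(THE d. d \<in> out_edges A \<and>
            (if d \<in> out_edges A then w d - (U (fst d0) - c) else w d) = 0) = d0"
proof (rule the_equality)
  show "d0 \<in> out_edges A \<and> (if d0 \<in> out_edges A then w d0 - (U (fst d0) - c) else w d0) = 0"
    using assms by (simp add: lightest_out_edge_def)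
  fix d
  assume d: "d \<in> out_edges A \<and> (if d \<in> out_edges A then w d - (U (fst d0) - c) else w d) = 0"
  then have "w d - (U (fst d0) - c) = 0" "w d = U (fst d) - c"
    using assms(2) by auto
  then have "U (fst d) = U (fst d0)"
    by linarith
  then show "d = d0"
    using d assms(1) out_edge_eq_if_weight_eq[of d A d0] by (simp add: lightest_out_edge_def)
qed

lemma cleb_step_stopped: "stopped s \<Longrightarrow> cleb_step E src tgt bd s = s"
  by (simp add: cleb_step_def)

lemma cleb_step_merge_last:
  assumes "\<not> stopped s" "path s = q @ [a, b]" "a \<notin> set q"
    and "lightest_out_edge b d0" "\<forall>d\<in>out_edges b. wt s d = U (fst d) - c"
    and "cls s (ohead src tgt d0) = a"
  shows "cleb_step E src tgt bd s =
    s\<lparr>cls := (\<lambda>u. if cls s u \<in> {a, b} then a \<union> b else cls s u), path := q @ [a \<union> b],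
      wt := (\<lambda>d. if d \<in> out_edges b then wt s d - (U (fst d0) - c) else wt s d),
      exposed := insert d0 (exposed s), revealed := Some d0\<rparr>"
proof -
  have last: "last (path s) = b"
    using assms(2) by simp
  have least: "(LEAST i. i < length (q @ [a, b]) \<and> (q @ [a, b]) ! i = a) = length q"
    using assms(3)
    by (intro Least_equality) (auto simp: nth_append not_less split: if_split_asm dest: nth_mem)
  show ?thesis
    unfolding cleb_step_def Let_def last out_edges_def[symmetric]
      lightest_out_edge_shift_Min[OF assms(4,5)] lightest_out_edge_THE[OF assms(4,5)]
    unfolding assms(2,6) least
    using assms(1) by (simp cong: if_cong)
qed

lemma cleb_step_extend:
  assumes "\<not> stopped s" "length (path s) = Suc m" "lightest_out_edge (path s ! m) d0"
    and "\<forall>d\<in>out_edges (path s ! m). wt s d = U (fst d) - c"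
    and "ohead src tgt d0 \<notin> \<Union>(set (path s))" "cls s (ohead src tgt d0) = {ohead src tgt d0}"
  shows "cleb_step E src tgt bd s =
    s\<lparr>path := path s @ [{ohead src tgt d0}],
      wt := (\<lambda>d. if d \<in> out_edges (path s ! m) then wt s d - (U (fst d0) - c) else wt s d),
      exposed := insert d0 (exposed s), stopped := (bd = ohead src tgt d0), revealed := Some d0\<rparr>"
proof -
  have "path s \<noteq> []"
    using assms(2) by auto
  then have last: "last (path s) = path s ! m"
    using assms(2) by (simp add: last_conv_nth)
  have "{ohead src tgt d0} \<notin> set (path s)"
    using assms(5) by auto
  then show ?thesis
    unfolding cleb_step_def Let_def last out_edges_def[symmetric]
      lightest_out_edge_shift_Min[OF assms(3,4)] lightest_out_edge_THE[OF assms(3,4)] assms(6)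
    using assms(1) by simp
qed

definition block_path :: "'v set list \<Rightarrow> ('v \<Rightarrow> 'v set) \<Rightarrow> bool" where
  "block_path p c \<longleftrightarrow> p \<noteq> [] \<and> distinct p \<and> pairwise disjnt (set p) \<and>
     (\<forall>A\<in>set p. A \<noteq> {} \<and> A \<subseteq> V \<and> bd \<notin> A \<and> (\<forall>u\<in>A. c u = A)) \<and>
     (\<forall>u. u \<notin> \<Union>(set p) \<longrightarrow> c u = {u})"

lemma block_pathD:
  assumes "block_path p c"
  shows "p \<noteq> []" "distinct p" "pairwise disjnt (set p)"
    and "A \<in> set p \<Longrightarrow> A \<noteq> {}" "A \<in> set p \<Longrightarrow> A \<subseteq> V" "A \<in> set p \<Longrightarrow> bd \<notin> A"
    and "A \<in> set p \<Longrightarrow> u \<in> A \<Longrightarrow> c u = A" "u \<notin> \<Union>(set p) \<Longrightarrow> c u = {u}"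
  using assms unfolding block_path_def by blast+

lemma block_path_index_eq:
  assumes bp: "block_path p c" and "i < length p" "j < length p" "u \<in> p ! i" "u \<in> p ! j"
  shows "i = j"
proof -
  have "\<not> disjnt (p ! i) (p ! j)"
    using assms(4,5) by (auto simp: disjnt_def)
  then have "p ! i = p ! j"
    using pairwiseD[OF block_pathD(3)[OF bp]] assms(2,3) by (meson nth_mem)
  then show ?thesis
    using block_pathD(2)[OF bp] assms(2,3) by (simp add: nth_eq_iff_index_eq)
qed

lemma block_path_out_edges_nonempty:
  assumes "block_path p c" "A \<in> set p"
  shows "out_edges A \<noteq> {}"
proof -
  obtain a where "a \<in> A"
    using block_pathD(4)[OF assms] by blast
  then show ?thesis
    using out_edges_nonempty block_pathD(5,6)[OF assms] by blast
qed

lemma block_path_snoc: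
  assumes bp: "block_path p c" and y: "y \<in> V" "y \<noteq> bd" "y \<notin> \<Union>(set p)"
  shows "block_path (p @ [{y}]) c"
proof -
  have "disjnt {y} A" if "A \<in> set p" for A
    using that y(3) by (simp add: disjnt_def)
  then have "pairwise disjnt (set (p @ [{y}]))"
    using block_pathD(3)[OF bp] by (simp add: pairwise_insert disjnt_sym)
  moreover have "distinct (p @ [{y}])"
    using block_pathD(2)[OF bp] y(3) by auto
  moreover have "\<forall>A\<in>set (p @ [{y}]). A \<noteq> {} \<and> A \<subseteq> V \<and> bd \<notin> A \<and> (\<forall>u\<in>A. c u = A)"
    using block_pathD(4-8)[OF bp] y by auto
  moreover have "\<forall>u. u \<notin> \<Union>(set (p @ [{y}])) \<longrightarrow> c u = {u}"
    using block_pathD(8)[OF bp] by simp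
  ultimately show ?thesis
    unfolding block_path_def by simp
qed

lemma block_path_merge_last:
  assumes bp: "block_path (q @ [a, b]) c"
  shows "block_path (q @ [a \<union> b]) (\<lambda>u. if c u \<in> {a, b} then a \<union> b else c u)"
    (is "block_path _ ?c")
proof -
  have dist: "distinct q" "a \<notin> set q" "b \<notin> set q"
    using block_pathD(2)[OF bp] by simp_all
  have disj_ab: "disjnt A (a \<union> b)" if "A \<in> set q" for A
    using pairwiseD[OF block_pathD(3)[OF bp], of A a] pairwiseD[OF block_pathD(3)[OF bp], of A b]
      that dist by auto
  have "a \<noteq> {}"
    using block_pathD(4)[OF bp, of a] by simp
  have "a \<union> b \<notin> set q"
  proof
    assume "a \<union> b \<in> set q"
    then have "disjnt (a \<union> b) (a \<union> b)"
      by (rule disj_ab)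
    then show False
      using \<open>a \<noteq> {}\<close> by simp
  qed
  have "pairwise disjnt (set q)"
    using pairwise_subset[OF block_pathD(3)[OF bp]] by auto
  then have "pairwise disjnt (set (q @ [a \<union> b]))"
    using disj_ab by (simp add: pairwise_insert disjnt_sym)
  moreover have "distinct (q @ [a \<union> b])"
    using dist \<open>a \<union> b \<notin> set q\<close> by simp
  moreover have "A \<noteq> {} \<and> A \<subseteq> V \<and> bd \<notin> A \<and> (\<forall>u\<in>A. ?c u = A)" if "A \<in> set (q @ [a \<union> b])" for A
  proof (cases "A = a \<union> b")
    case True
    have "?c u = a \<union> b" if "u \<in> a \<union> b" for u
      using that block_pathD(7)[OF bp, of a u] block_pathD(7)[OF bp, of b u] by auto
    then show ?thesis
      using True block_pathD(4-6)[OF bp, of a] block_pathD(4-6)[OF bp, of b] by auto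
  next
    case False
    then have A: "A \<in> set q"
      using that by simp
    have "?c u = A" if "u \<in> A" for u
      using block_pathD(7)[OF bp, of A u] that A dist by auto
    then show ?thesis
      using A block_pathD(4-6)[OF bp, of A] by auto
  qed
  moreover have "?c u = {u}" if "u \<notin> \<Union>(set (q @ [a \<union> b]))" for u
    using block_pathD(8)[OF bp, of u] that by auto
  ultimately show ?thesis
    unfolding block_path_def by blast
qed

definition descending_exits :: "'v set list \<Rightarrow> ('e \<times> bool) set \<Rightarrow> (nat \<Rightarrow> 'e \<times> bool) \<Rightarrow> bool" where
  "descending_exits p S f \<longleftrightarrow>
     (\<forall>i. Suc i < length p \<longrightarrow>
        f i \<in> S \<and> lightest_out_edge (p ! i) (f i) \<and> ohead src tgt (f i) \<in> p ! Suc i) \<and>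
     (\<forall>i j. i < j \<longrightarrow> Suc j < length p \<longrightarrow> U (fst (f j)) < U (fst (f i)))"

lemma descending_exitsD:
  assumes "descending_exits p S f"
  shows "Suc i < length p \<Longrightarrow> f i \<in> S"
    and "Suc i < length p \<Longrightarrow> lightest_out_edge (p ! i) (f i)"
    and "Suc i < length p \<Longrightarrow> ohead src tgt (f i) \<in> p ! Suc i"
    and "i < j \<Longrightarrow> Suc j < length p \<Longrightarrow> U (fst (f j)) < U (fst (f i))"
  using assms unfolding descending_exits_def by blast+

lemma descending_exits_merge_last:
  assumes de: "descending_exits (q @ [a, b]) S f"
  shows "descending_exits (q @ [a \<union> b]) (insert d S) f"
proof -
  have "f i \<in> insert d S \<and> lightest_out_edge ((q @ [a \<union> b]) ! i) (f i) \<and>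
      ohead src tgt (f i) \<in> (q @ [a \<union> b]) ! Suc i" if i: "i < length q" for i
  proof -
    have "(q @ [a \<union> b]) ! i = (q @ [a, b]) ! i"
      using i by (simp add: nth_append)
    moreover have "(q @ [a, b]) ! Suc i \<subseteq> (q @ [a \<union> b]) ! Suc i"
      using i by (cases "Suc i < length q") (auto simp: nth_append)
    ultimately show ?thesis
      using descending_exitsD(1-3)[OF de, of i] i by auto
  qed
  then show ?thesis
    using descending_exitsD(4)[OF de] unfolding descending_exits_def by simp
qed

lemma descending_exits_snoc:
  assumes de: "descending_exits p S f" and len: "length p = Suc m"
    and d0: "lightest_out_edge (p ! m) d0" "ohead src tgt d0 \<in> B"
    and lighter: "\<forall>i<m. U (fst d0) < U (fst (f i))"
  shows "descending_exits (p @ [B]) (insert d0 S) (f(m := d0))"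
proof -
  have "(f(m := d0)) i \<in> insert d0 S \<and> lightest_out_edge ((p @ [B]) ! i) ((f(m := d0)) i) \<and>
      ohead src tgt ((f(m := d0)) i) \<in> (p @ [B]) ! Suc i" if "i \<le> m" for i
  proof (cases "i = m")
    case True
    then show ?thesis
      using d0 len by (simp add: nth_append)
  next
    case False
    then show ?thesis
      using descending_exitsD(1-3)[OF de, of i] that len by (simp add: nth_append)
  qed
  moreover have "U (fst ((f(m := d0)) j)) < U (fst ((f(m := d0)) i))" if "i < j" "j \<le> m" for i j
    using descending_exitsD(4)[OF de, of i j] lighter that len by (cases "j = m") auto
  ultimately show ?thesis
    using len unfolding descending_exits_def by auto
qed

definition shifted_weights ::
  "'v set list \<Rightarrow> ('e \<times> bool \<Rightarrow> real) \<Rightarrow> (nat \<Rightarrow> 'e \<times> bool) \<Rightarrow> real \<Rightarrow> bool" where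
  "shifted_weights p w f c \<longleftrightarrow>
     (\<forall>d. fst d \<in> E \<longrightarrow> otail src tgt d \<notin> \<Union>(set p) \<longrightarrow> w d = U (fst d)) \<and>
     (\<forall>i. Suc i < length p \<longrightarrow> (\<forall>d\<in>out_edges (p ! i). w d = U (fst d) - U (fst (f i)))) \<and>
     (\<forall>d\<in>out_edges (last p). w d = U (fst d) - c)"

lemma shifted_weightsD:
  assumes "shifted_weights p w f c"
  shows "fst d \<in> E \<Longrightarrow> otail src tgt d \<notin> \<Union>(set p) \<Longrightarrow> w d = U (fst d)"
    and "Suc i < length p \<Longrightarrow> d \<in> out_edges (p ! i) \<Longrightarrow> w d = U (fst d) - U (fst (f i))"
    and "d \<in> out_edges (last p) \<Longrightarrow> w d = U (fst d) - c"
  using assms unfolding shifted_weights_def by blast+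

lemma shifted_weights_merge_last:
  assumes sw: "shifted_weights (q @ [a, b]) w f c" and bp: "block_path (q @ [a, b]) cl"
  shows "shifted_weights (q @ [a \<union> b])
    (\<lambda>d. if d \<in> out_edges b then w d - (U (fst (f (length q))) - c) else w d)
    f (U (fst (f (length q))))"
    (is "shifted_weights _ ?w _ _")
proof -
  let ?n = "length q" and ?p = "q @ [a, b]"
  have ab: "?p ! ?n = a" "?p ! Suc ?n = b"
    by (simp_all add: nth_append)
  have outside: "?w d = U (fst d)" if "fst d \<in> E" "otail src tgt d \<notin> \<Union>(set (q @ [a \<union> b]))" for d
    using shifted_weightsD(1)[OF sw, of d] that by (auto simp: out_edges_def)
  have inner: "?w d = U (fst d) - U (fst (f i))" if "i < ?n" "d \<in> out_edges (q ! i)" for i d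
  proof -
    have "d \<in> out_edges (?p ! i)"
      using that by (simp add: nth_append)
    moreover have "otail src tgt d \<notin> ?p ! Suc ?n"
      using block_path_index_eq[OF bp, of i "Suc ?n"] calculation that by (auto simp: out_edges_def)
    ultimately show ?thesis
      using shifted_weightsD(2)[OF sw, of i d] that ab by (auto simp: out_edges_def)
  qed
  have last: "?w d = U (fst d) - U (fst (f ?n))" if d: "d \<in> out_edges (a \<union> b)" for d
  proof (cases "otail src tgt d \<in> b")
    case True
    then have "d \<in> out_edges (last ?p)"
      using d by (simp add: out_edges_def)
    then show ?thesis
      using shifted_weightsD(3)[OF sw, of d] by (simp add: out_edges_def)
  next
    case False
    then have "d \<in> out_edges (?p ! ?n)" "d \<notin> out_edges b"
      using d ab by (auto simp: out_edges_def)
    then show ?thesis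
      using shifted_weightsD(2)[OF sw, of ?n d] by simp
  qed
  show ?thesis
    unfolding shifted_weights_def using outside inner last by (simp add: nth_append)
qed

lemma shifted_weights_snoc:
  assumes sw: "shifted_weights p w f c" and bp: "block_path p cl" and len: "length p = Suc m"
    and y: "y \<notin> \<Union>(set p)"
  shows "shifted_weights (p @ [{y}])
    (\<lambda>d. if d \<in> out_edges (p ! m) then w d - (U (fst d0) - c) else w d) (f(m := d0)) 0"
    (is "shifted_weights _ ?w _ _")
proof -
  have "p \<noteq> []"
    using len by auto
  then have last: "last p = p ! m"
    using len by (simp add: last_conv_nth)
  have pm: "p ! m \<in> set p"
    using len by simp
  have outside: "?w d = U (fst d)" if "fst d \<in> E" "otail src tgt d \<notin> \<Union>(set (p @ [{y}]))" for d
    using shifted_weightsD(1)[OF sw, of d] that pm by (auto simp: out_edges_def)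
  have inner: "?w d = U (fst d) - U (fst ((f(m := d0)) i))"
    if "i \<le> m" "d \<in> out_edges (p ! i)" for i d
  proof (cases "i = m")
    case True
    then show ?thesis
      using shifted_weightsD(3)[OF sw, of d] that last by simp
  next
    case False
    then have "d \<notin> out_edges (p ! m)"
      using block_path_index_eq[OF bp, of i m] that len by (auto simp: out_edges_def)
    then show ?thesis
      using shifted_weightsD(2)[OF sw, of i d] that False len by simp
  qed
  have new: "?w d = U (fst d) - 0" if "d \<in> out_edges {y}" for d
  proof -
    have "fst d \<in> E" "otail src tgt d \<notin> \<Union>(set p)"
      using that y by (auto simp: out_edges_def)
    then show ?thesis
      using shifted_weightsD(1)[OF sw, of d] pm by (auto simp: out_edges_def)
  qed
  show ?thesis
    unfolding shifted_weights_def using outside inner new len by (auto simp: nth_append)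
qed

(* f i is the edge along which the walk left block i; c is the total amount subtracted so far
   from the weights of the exits of the last block. *)
definition walk_inv :: "('v, 'e) cleb_state \<Rightarrow> (nat \<Rightarrow> 'e \<times> bool) \<Rightarrow> real \<Rightarrow> bool" where
  "walk_inv s f c \<longleftrightarrow> \<not> stopped s \<and> block_path (path s) (cls s) \<and>
     \<Union>(set (path s)) = ip_verts src tgt x (unoriented (exposed s)) \<and>
     descending_exits (path s) (exposed s) f \<and> shifted_weights (path s) (wt s) f c"

lemma walk_inv_init: "walk_inv (cleb_init U x) f 0"
  using x_in_V x_neq_bd
  by (auto simp: walk_inv_def cleb_init_def block_path_def descending_exits_def
      shifted_weights_def ip_verts_def)

lemma lightest_out_edge_lighter_than_exits:
  assumes bp: "block_path p cl" and de: "descending_exits p S f" and len: "length p = Suc m"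
    and d0: "lightest_out_edge (p ! m) d0" and no_back: "\<And>n. m = Suc n \<Longrightarrow> d0 \<noteq> flip (f n)"
    and "i < m"
  shows "U (fst d0) < U (fst (f i))"
proof -
  obtain n where m: "m = Suc n"
    using \<open>i < m\<close> by (cases m) auto
  have fn: "f n \<in> out_edges (p ! n)" "ohead src tgt (f n) \<in> p ! m"
    using descending_exitsD(2,3)[OF de, of n] lightest_out_edgeD(1) len m by auto
  have "otail src tgt (f n) \<notin> p ! m"
    using block_path_index_eq[OF bp, of n m] fn len m by (auto simp: out_edges_def)
  then have "flip (f n) \<in> out_edges (p ! m)"
    using fn by (simp add: out_edges_def)
  then have "U (fst d0) < U (fst (f n))"
    using lightest_out_edgeD(2)[OF d0, of "flip (f n)"] no_back[OF m] by auto
  also have "U (fst (f n)) \<le> U (fst (f i))"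
    using descending_exitsD(4)[OF de, of i n] len m \<open>i < m\<close> by (cases "i = n") auto
  finally show ?thesis .
qed

lemma lightest_out_edge_leaves_tree:
  assumes bp: "block_path p cl" and de: "descending_exits p S f" and len: "length p = Suc m"
    and d0: "lightest_out_edge (p ! m) d0" and no_back: "\<And>n. m = Suc n \<Longrightarrow> d0 \<noteq> flip (f n)"
  shows "ohead src tgt d0 \<notin> \<Union>(set p)"
proof
  assume "ohead src tgt d0 \<in> \<Union>(set p)"
  then obtain j where j: "j < length p" "ohead src tgt d0 \<in> p ! j"
    by (auto simp: in_set_conv_nth)
  have d0_out: "fst d0 \<in> E" "otail src tgt d0 \<in> p ! m" "ohead src tgt d0 \<notin> p ! m"
    using lightest_out_edgeD(1)[OF d0] by (auto simp: out_edges_def)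
  then have "j < m"
    using j len by (cases "j = m") auto
  have "otail src tgt d0 \<notin> p ! j"
    using block_path_index_eq[OF bp, of j m] d0_out j \<open>j < m\<close> len by auto
  then have "flip d0 \<in> out_edges (p ! j)"
    using d0_out j by (simp add: out_edges_def)
  moreover have "flip d0 \<noteq> f j"
  proof
    assume fj: "flip d0 = f j"
    then have "ohead src tgt (f j) \<in> p ! m" "ohead src tgt (f j) \<in> p ! Suc j"
      using fj[symmetric] d0_out descending_exitsD(3)[OF de, of j] len \<open>j < m\<close> by auto
    then have "m = Suc j"
      using block_path_index_eq[OF bp, of m "Suc j"] len \<open>j < m\<close> by auto
    then show False
      using no_back fj[symmetric] by auto
  qed
  ultimately have "U (fst (f j)) < U (fst d0)"
    using lightest_out_edgeD(2)[OF descending_exitsD(2)[OF de, of j], of "flip d0"] len \<open>j < m\<close>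
    by auto
  moreover have "U (fst d0) < U (fst (f j))"
    using lightest_out_edge_lighter_than_exits[OF bp de len d0 no_back \<open>j < m\<close>] .
  ultimately show False
    by simp
qed

lemma lightest_out_edge_lighter_than_tree_exits:
  assumes bp: "block_path p cl" and de: "descending_exits p S f" and len: "length p = Suc m"
    and d0: "lightest_out_edge (p ! m) d0" and no_back: "\<And>n. m = Suc n \<Longrightarrow> d0 \<noteq> flip (f n)"
    and d: "d \<in> out_edges (\<Union>(set p))"
  shows "U (fst d0) \<le> U (fst d)"
proof -
  obtain i where i: "i < length p" "otail src tgt d \<in> p ! i"
    using d by (auto simp: out_edges_def in_set_conv_nth)
  then have out: "d \<in> out_edges (p ! i)"
    using d by (auto simp: out_edges_def)
  show ?thesis
  proof (cases "i = m")
    case True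
    then show ?thesis
      using lightest_out_edgeD(2)[OF d0, of d] out by (cases "d = d0") auto
  next
    case False
    then have "i < m"
      using i len by simp
    have "ohead src tgt (f i) \<in> \<Union>(set p)"
      using descending_exitsD(3)[OF de, of i] \<open>i < m\<close> len by auto
    then have "d \<noteq> f i"
      using d by (auto simp: out_edges_def)
    then have "U (fst (f i)) < U (fst d)"
      using lightest_out_edgeD(2)[OF descending_exitsD(2)[OF de, of i] out] \<open>i < m\<close> len by auto
    moreover have "U (fst d0) < U (fst (f i))"
      by (rule lightest_out_edge_lighter_than_exits[OF bp de len d0 no_back \<open>i < m\<close>])
    ultimately show ?thesis
      by simp
  qed
qed

lemma lightest_out_edge_is_invasion_edge:
  assumes bp: "block_path p cl" and de: "descending_exits p S f" and len: "length p = Suc m"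
    and d0: "lightest_out_edge (p ! m) d0" and no_back: "\<And>n. m = Suc n \<Longrightarrow> d0 \<noteq> flip (f n)"
    and tree: "\<Union>(set p) = ip_verts src tgt x T"
  shows "ip_candidates E src tgt x T \<noteq> {}" and "arg_min_on U (ip_candidates E src tgt x T) = fst d0"
proof -
  let ?R = "\<Union>(set p)" and ?C = "ip_candidates E src tgt x T"
  have C: "?C = {e \<in> E. (src e \<in> ?R) \<noteq> (tgt e \<in> ?R)}"
    by (simp add: ip_candidates_def tree)
  have "p ! m \<in> set p"
    using len by simp
  then have "fst d0 \<in> E" "otail src tgt d0 \<in> ?R" "ohead src tgt d0 \<notin> ?R"
    using lightest_out_edgeD(1)[OF d0] lightest_out_edge_leaves_tree[OF bp de len d0 no_back]
    by (auto simp: out_edges_def)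
  then have d0_C: "fst d0 \<in> ?C"
    unfolding C by (cases "snd d0") (auto simp: otail_def ohead_def)
  then show "?C \<noteq> {}"
    by auto
  have "U (fst d0) \<le> U e" if e: "e \<in> ?C" for e
  proof -
    have "(src e \<in> ?R) \<noteq> (tgt e \<in> ?R)"
      using e C by simp
    then obtain b where "otail src tgt (e, b) \<in> ?R" "ohead src tgt (e, b) \<notin> ?R"
      by (rule crossing_edge_orientation)
    then have "(e, b) \<in> out_edges ?R"
      using e C by (simp add: out_edges_def)
    from lightest_out_edge_lighter_than_tree_exits[OF bp de len d0 no_back this]
    show ?thesis
      by simp
  qed
  moreover have "inj_on U ?C"
    using inj_on_subset[OF generic_inj_on[OF generic_weights]] C by auto
  ultimately show "arg_min_on U ?C = fst d0"
    unfolding arg_min_on_def using d0_C by (intro arg_min_inj_eq) auto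
qed

lemma walk_inv_backtrack:
  assumes inv: "walk_inv s f c" and p: "path s = q @ [a, b]"
    and d0: "lightest_out_edge b d0" "d0 = flip (f (length q))"
  shows "revealed (cleb_step E src tgt bd s) = Some d0"
    and "exposed (cleb_step E src tgt bd s) = insert d0 (exposed s)"
    and "walk_inv (cleb_step E src tgt bd s) f (U (fst (f (length q))))"
proof -
  let ?n = "length q"
  have ns: "\<not> stopped s" and bp: "block_path (q @ [a, b]) (cls s)"
    and tree: "\<Union>(set (path s)) = ip_verts src tgt x (unoriented (exposed s))"
    and de: "descending_exits (q @ [a, b]) (exposed s) f"
    and sw: "shifted_weights (q @ [a, b]) (wt s) f c"
    using inv p by (simp_all add: walk_inv_def)
  have fn: "f ?n \<in> exposed s" "otail src tgt (f ?n) \<in> a"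
    using descending_exitsD(1)[OF de, of ?n]
      lightest_out_edgeD(1)[OF descending_exitsD(2)[OF de, of ?n]]
    by (auto simp: out_edges_def nth_append)
  have "cls s (ohead src tgt d0) = a"
    using block_pathD(7)[OF bp, of a] fn d0(2) by simp
  moreover have "a \<notin> set q"
    using block_pathD(2)[OF bp] by simp
  moreover have "\<forall>d\<in>out_edges b. wt s d = U (fst d) - c"
    using shifted_weightsD(3)[OF sw] by simp
  ultimately have step: "cleb_step E src tgt bd s =
    s\<lparr>cls := (\<lambda>u. if cls s u \<in> {a, b} then a \<union> b else cls s u), path := q @ [a \<union> b],
      wt := (\<lambda>d. if d \<in> out_edges b then wt s d - (U (fst d0) - c) else wt s d),
      exposed := insert d0 (exposed s), revealed := Some d0\<rparr>"
    using cleb_step_merge_last[OF ns p _ d0(1)] by blast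
  then show "revealed (cleb_step E src tgt bd s) = Some d0"
    and "exposed (cleb_step E src tgt bd s) = insert d0 (exposed s)"
    by simp_all
  have "fst d0 \<in> unoriented (exposed s)"
    using fst_in_unoriented_if_flip_in[of d0] fn(1) d0(2) by simp
  then have "unoriented (insert d0 (exposed s)) = unoriented (exposed s)"
    by (simp add: unoriented_insert insert_absorb)
  moreover have "\<Union>(set (q @ [a \<union> b])) = \<Union>(set (path s))"
    using p by auto
  ultimately show "walk_inv (cleb_step E src tgt bd s) f (U (fst (f ?n)))"
    unfolding walk_inv_def step d0(2) fst_flip
    using ns tree block_path_merge_last[OF bp] descending_exits_merge_last[OF de]
      shifted_weights_merge_last[OF sw bp]
    by simp
qed

lemma walk_inv_advance:
  assumes inv: "walk_inv s f c" and len: "length (path s) = Suc m"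
    and d0: "lightest_out_edge (path s ! m) d0" and fresh: "ohead src tgt d0 \<notin> \<Union>(set (path s))"
    and lighter: "\<forall>i<m. U (fst d0) < U (fst (f i))"
  shows "revealed (cleb_step E src tgt bd s) = Some d0"
    and "exposed (cleb_step E src tgt bd s) = insert d0 (exposed s)"
    and "stopped (cleb_step E src tgt bd s) \<or> walk_inv (cleb_step E src tgt bd s) (f(m := d0)) 0"
proof -
  let ?p = "path s" and ?y = "ohead src tgt d0"
  have ns: "\<not> stopped s" and bp: "block_path ?p (cls s)"
    and tree: "\<Union>(set ?p) = ip_verts src tgt x (unoriented (exposed s))"
    and de: "descending_exits ?p (exposed s) f" and sw: "shifted_weights ?p (wt s) f c"
    using inv by (simp_all add: walk_inv_def)
  have "?p \<noteq> []"
    using len by auto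
  then have last: "last ?p = ?p ! m"
    using len by (simp add: last_conv_nth)
  have "\<forall>d\<in>out_edges (?p ! m). wt s d = U (fst d) - c"
    using shifted_weightsD(3)[OF sw] unfolding last by blast
  then have step: "cleb_step E src tgt bd s =
    s\<lparr>path := ?p @ [{?y}],
      wt := (\<lambda>d. if d \<in> out_edges (?p ! m) then wt s d - (U (fst d0) - c) else wt s d),
      exposed := insert d0 (exposed s), stopped := (bd = ?y), revealed := Some d0\<rparr>"
    using cleb_step_extend[OF ns len d0 _ fresh block_pathD(8)[OF bp fresh]] by simp
  then show "revealed (cleb_step E src tgt bd s) = Some d0"
    and "exposed (cleb_step E src tgt bd s) = insert d0 (exposed s)"
    by simp_all
  show "stopped (cleb_step E src tgt bd s) \<or> walk_inv (cleb_step E src tgt bd s) (f(m := d0)) 0"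
  proof (cases "bd = ?y")
    case True
    then show ?thesis
      unfolding step by simp
  next
    case False
    have d0_out: "fst d0 \<in> E" "otail src tgt d0 \<in> \<Union>(set ?p)"
      using lightest_out_edgeD(1)[OF d0] len by (auto simp: out_edges_def)
    then have "\<Union>(set (?p @ [{?y}])) = ip_verts src tgt x (unoriented (insert d0 (exposed s)))"
      unfolding unoriented_insert ip_verts_insert tree[symmetric]
      by (cases "snd d0") (auto simp: otail_def ohead_def)
    then show ?thesis
      unfolding walk_inv_def step
      using ns False block_path_snoc[OF bp ohead_in_V[OF d0_out(1)] _ fresh]
        descending_exits_snoc[OF de len d0 singletonI lighter]
        shifted_weights_snoc[OF sw bp len fresh]
      by simp
  qed
qed

lemma walk_inv_step:
  assumes inv: "walk_inv s f c"
  shows "\<exists>d0. revealed (cleb_step E src tgt bd s) = Some d0 \<and>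
    exposed (cleb_step E src tgt bd s) = insert d0 (exposed s) \<and>
    (flip d0 \<notin> exposed s \<longrightarrow> ip_candidates E src tgt x (unoriented (exposed s)) \<noteq> {} \<and>
       arg_min_on U (ip_candidates E src tgt x (unoriented (exposed s))) = fst d0) \<and>
    (stopped (cleb_step E src tgt bd s) \<or> (\<exists>f' c'. walk_inv (cleb_step E src tgt bd s) f' c'))"
proof -
  have bp: "block_path (path s) (cls s)" and de: "descending_exits (path s) (exposed s) f"
    and tree: "\<Union>(set (path s)) = ip_verts src tgt x (unoriented (exposed s))"
    using inv by (simp_all add: walk_inv_def)
  obtain m where len: "length (path s) = Suc m"
    using block_pathD(1)[OF bp] by (cases "path s") auto
  then have "out_edges (path s ! m) \<noteq> {}"
    using block_path_out_edges_nonempty[OF bp] by simp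
  then obtain d0 where d0: "lightest_out_edge (path s ! m) d0"
    by (rule lightest_out_edge_exists)
  show ?thesis
  proof (cases "\<exists>n. m = Suc n \<and> d0 = flip (f n)")
    case True
    then obtain n where n: "m = Suc n" "d0 = flip (f n)"
      by blast
    have p: "path s = take n (path s) @ [path s ! n, path s ! m]"
      using take_nth_nth_eq[of "path s" n] len n by simp
    have "d0 = flip (f (length (take n (path s))))"
      using len n by simp
    note backtrack = walk_inv_backtrack[OF inv p d0 this]
    have "flip d0 \<in> exposed s"
      using descending_exitsD(1)[OF de, of n] len n by simp
    then show ?thesis
      using backtrack by blast
  next
    case False
    then have no_back: "\<And>n. m = Suc n \<Longrightarrow> d0 \<noteq> flip (f n)"
      by blast
    have "\<forall>i<m. U (fst d0) < U (fst (f i))"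
      using lightest_out_edge_lighter_than_exits[OF bp de len d0 no_back] by blast
    note advance =
      walk_inv_advance[OF inv len d0 lightest_out_edge_leaves_tree[OF bp de len d0 no_back] this]
    show ?thesis
      using advance lightest_out_edge_is_invasion_edge[OF bp de len d0 no_back tree] by blast
  qed
qed

abbreviation walk :: "nat \<Rightarrow> ('v, 'e) cleb_state" where
  "walk j \<equiv> cleb E src tgt U bd x j"

lemma walk_inv_reachable: "stopped (walk j) \<or> (\<exists>f c. walk_inv (walk j) f c)"
proof (induction j)
  case 0
  show ?case
    using walk_inv_init by auto
next
  case (Suc j)
  then show ?case
  proof
    assume "stopped (walk j)"
    then show ?thesis
      by (simp add: cleb_step_stopped)
  next
    assume "\<exists>f c. walk_inv (walk j) f c"
    then obtain f c where "walk_inv (walk j) f c"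
      by blast
    then show ?thesis
      using walk_inv_step by fastforce
  qed
qed

lemma unoriented_exposed_Suc_old:
  assumes "\<not> cleb_new_step E src tgt U bd x (Suc j)"
  shows "unoriented (exposed (walk (Suc j))) = unoriented (exposed (walk j))"
proof (cases "stopped (walk j)")
  case True
  then show ?thesis
    by (simp add: cleb_step_stopped)
next
  case False
  then obtain f c where inv: "walk_inv (walk j) f c"
    using walk_inv_reachable by blast
  obtain d0 where rev: "revealed (walk (Suc j)) = Some d0"
    and exp: "exposed (walk (Suc j)) = insert d0 (exposed (walk j))"
    using walk_inv_step[OF inv] unfolding cleb.simps(2) by blast
  have "flip d0 \<in> exposed (walk j)"
    using assms False rev by (simp add: cleb_new_step_def)
  then have "fst d0 \<in> unoriented (exposed (walk j))"
    by (rule fst_in_unoriented_if_flip_in)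
  then show ?thesis
    using exp by (simp add: unoriented_insert insert_absorb)
qed

lemma unoriented_exposed_Suc_new:
  assumes "cleb_new_step E src tgt U bd x (Suc j)"
  shows "unoriented (exposed (walk (Suc j))) =
    (let T = unoriented (exposed (walk j)); C = ip_candidates E src tgt x T in
     if C = {} then T else insert (arg_min_on U C) T)"
proof -
  have "\<not> stopped (walk j)"
    using assms by (simp add: cleb_new_step_def)
  then obtain f c where inv: "walk_inv (walk j) f c"
    using walk_inv_reachable by blast
  obtain d0 where rev: "revealed (walk (Suc j)) = Some d0"
    and exp: "exposed (walk (Suc j)) = insert d0 (exposed (walk j))"
    and new: "flip d0 \<notin> exposed (walk j) \<longrightarrow>
      ip_candidates E src tgt x (unoriented (exposed (walk j))) \<noteq> {} \<and>
      arg_min_on U (ip_candidates E src tgt x (unoriented (exposed (walk j)))) = fst d0"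
    using walk_inv_step[OF inv] unfolding cleb.simps(2) by blast
  have "flip d0 \<notin> exposed (walk j)"
    using assms rev by (simp add: cleb_new_step_def)
  then show ?thesis
    using exp new by (simp add: Let_def unoriented_insert)
qed

lemma unoriented_exposed_between:
  assumes "s \<le> t" "\<forall>u. s < u \<and> u \<le> t \<longrightarrow> \<not> cleb_new_step E src tgt U bd x u"
  shows "unoriented (exposed (walk t)) = unoriented (exposed (walk s))"
  using assms
proof (induction t rule: dec_induct)
  case base
  then show ?case
    by simp
next
  case (step t)
  then show ?case
    using unoriented_exposed_Suc_old by simp
qed

lemma cleb_new_step_one: "cleb_new_step E src tgt U bd x 1"
proof -
  obtain d0 where "revealed (walk (Suc 0)) = Some d0"
    using walk_inv_step[OF walk_inv_init] unfolding cleb.simps by blast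
  then show ?thesis
    by (simp add: cleb_new_step_def cleb_init_def)
qed

lemma cleb_tau_invasion:
  "cleb_tau E src tgt U bd x k t \<Longrightarrow> unoriented (exposed (walk t)) = invasion E src tgt U x k"
proof (induction rule: cleb_tau.induct)
  case tau_one
  show ?case
    using unoriented_exposed_Suc_new[of 0] cleb_new_step_one by (simp add: cleb_init_def Let_def)
next
  case (tau_suc k s t)
  then obtain j where t: "t = Suc j"
    by (cases t) auto
  have "unoriented (exposed (walk j)) = unoriented (exposed (walk s))"
    using unoriented_exposed_between[of s j] tau_suc t by auto
  then show ?case
    using unoriented_exposed_Suc_new[of j] tau_suc t by (simp add: Let_def)
qed

end

theorem mainTheorem8:
  fixes V :: "'v set" and E :: "'e set" and src tgt :: "'e \<Rightarrow> 'v"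
    and U :: "'e \<Rightarrow> real" and bd x :: 'v and k t :: nat
  assumes "finite_loopless_multigraph V E src tgt"
    and "mg_connected V E src tgt"
    and "bd \<in> V"
    and "\<forall>e\<in>E. 0 \<le> U e"
    and "generic E U"
    and "x \<in> V" and "x \<noteq> bd"
    and "cleb_tau E src tgt U bd x k t"
  shows "unoriented (exposed (cleb E src tgt U bd x t)) = invasion E src tgt U x k"
proof -
  interpret cleb_graph V E src tgt U bd x
    by unfold_locales (fact assms)+
  show ?thesis
    using cleb_tau_invasion assms(8) .
qed

end
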